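(* For any two undirected graphs $G,H$, with $G+H$ denoting their disjoint union, $\beta(G+H)=\beta(G)+\beta(H)$ and $\beta^*(G+H)=\beta^*(G)+\beta^*(H)$.
   Context: For an undirected graph $G$ on vertex set $[n]$, consider the index coding problem: a server holds messages $x_1,\dots,x_n\in\Sigma$ ($|\Sigma|>1$), receiver $i$ wants $x_i$ and knows $x_j$ for every neighbor $j$ of $i$. A solution is an encoding $\mathcal{E}:\Sigma^n\to\Sigma_P$ from which each receiver can recover its message given its side information, for all message values. $\beta_t(G)$ is the minimum of $\lceil\log_2|\Sigma_P|\rceil$ over solutions with $|\Sigma|=2^t$; $\beta(G)=\lim_t\beta_t(G)/t=\inf_t\beta_t(G)/t$. For a positive integer $t$, $t\cdot G$ denotes the disjoint union of $t$ copies of $G$, and $\beta^*(G)=\lim_{t\to\infty}\frac1t\beta_1(t\cdot G)=\inf_t\frac1t\beta_1(t\cdot G)$. *)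

theory Defs
  imports Complex_Main
begin

text \<open>A graph on vertex set [n] is represented by n and an edge predicate E on
  {0..<n} (vertices 0..n-1); only edges between vertices below n are relevant.\<close>

definition undirected :: "nat \<Rightarrow> (nat \<Rightarrow> nat \<Rightarrow> bool) \<Rightarrow> bool" where
  "undirected n E \<longleftrightarrow> (\<forall>i<n. \<forall>j<n. E i j = E j i) \<and> (\<forall>i<n. \<not> E i i)"

definition msgs :: "nat \<Rightarrow> nat \<Rightarrow> (nat \<Rightarrow> nat) set" where
  "msgs n t = {x. (\<forall>i<n. x i < 2 ^ t) \<and> (\<forall>i\<ge>n. x i = 0)}"

definition side :: "nat \<Rightarrow> (nat \<Rightarrow> nat \<Rightarrow> bool) \<Rightarrow> nat \<Rightarrow> (nat \<Rightarrow> nat) \<Rightarrow> (nat \<Rightarrow> nat)" where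
  "side n E i x = (\<lambda>j. if j < n \<and> E i j then x j else 0)"

definition ic_solution ::
  "nat \<Rightarrow> (nat \<Rightarrow> nat \<Rightarrow> bool) \<Rightarrow> nat \<Rightarrow> nat set \<Rightarrow> ((nat \<Rightarrow> nat) \<Rightarrow> nat) \<Rightarrow> bool" where
  "ic_solution n E t P enc \<longleftrightarrow> finite P \<and> enc ` msgs n t \<subseteq> P \<and>
     (\<exists>D. \<forall>i<n. \<forall>x\<in>msgs n t. D i (enc x) (side n E i x) = x i)"

definition beta_t :: "nat \<Rightarrow> (nat \<Rightarrow> nat \<Rightarrow> bool) \<Rightarrow> nat \<Rightarrow> nat" where
  "beta_t n E t = Inf {nat \<lceil>log 2 (real (card P))\<rceil> | P enc. ic_solution n E t P enc}"

definition beta :: "nat \<Rightarrow> (nat \<Rightarrow> nat \<Rightarrow> bool) \<Rightarrow> real" where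
  "beta n E = (INF t\<in>{1..}. real (beta_t n E t) / real t)"

text \<open>Disjoint union G + H: G on 0..n-1, H shifted to n..n+m-1.\<close>
definition dunion :: "nat \<Rightarrow> (nat \<Rightarrow> nat \<Rightarrow> bool) \<Rightarrow> nat \<Rightarrow> (nat \<Rightarrow> nat \<Rightarrow> bool) \<Rightarrow> (nat \<Rightarrow> nat \<Rightarrow> bool)" where
  "dunion n E m F = (\<lambda>i j. (i < n \<and> j < n \<and> E i j) \<or>
      (n \<le> i \<and> i < n + m \<and> n \<le> j \<and> j < n + m \<and> F (i - n) (j - n)))"

text \<open>t copies of G on t*n vertices: vertex k*n+i is copy k of vertex i.\<close>
definition copies :: "nat \<Rightarrow> nat \<Rightarrow> (nat \<Rightarrow> nat \<Rightarrow> bool) \<Rightarrow> (nat \<Rightarrow> nat \<Rightarrow> bool)" where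
  "copies t n E = (\<lambda>i j. i < t * n \<and> j < t * n \<and> i div n = j div n \<and> E (i mod n) (j mod n))"

definition beta_star :: "nat \<Rightarrow> (nat \<Rightarrow> nat \<Rightarrow> bool) \<Rightarrow> real" where
  "beta_star n E = (INF t\<in>{1..}. real (beta_t (t * n) (copies t n E) 1) / real t)"

end

(*
  An index code over the alphabet of size 2^t is the same thing as a proper colouring of the
  confusion graph on message vectors, where x and y are confusable if some receiver sees the same
  side information under both but wants different messages; so beta_t is the ceiling of log_2 of
  its chromatic number.  The confusion graph of G + H is the OR-product of those of G and H, hence
  colours multiply and beta_t(G + H) <= beta_t(G) + beta_t(H).  Conversely every colour class of
  the OR-product lies in a product of independent sets, so chi(G + H) >= |V_G| |V_H| / (alpha_G
  alpha_H); and since confusion graphs are vertex transitive under bitwise translation, a greedy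
  covering by translates of a maximum independent set gives chi <= (|V| / alpha) (ln |V| + 2).
  Together beta_t(G) + beta_t(H) <= beta_t(G + H) + O(log (t n)).  Both beta and beta* are infima
  of f(t)/t for sequences f that are subadditive in t (split each symbol into low and high digits;
  (a + b) copies are a copies plus b copies), and the logarithmic error vanishes after dividing by t.
*)
theory Submission
  imports Defs "HOL-Library.Nat_Bijection" "HOL-Library.FuncSet"
begin

section \<open>Index codes as colourings of the confusion graph\<close>

lemma zero_in_msgs: "(\<lambda>_. 0) \<in> msgs n t"
  by (simp add: msgs_def)

lemma msgs_nonempty: "msgs n t \<noteq> {}"
  using zero_in_msgs by blast

lemma inj_on_restrict_msgs: "inj_on (\<lambda>x. restrict x {..<n}) (msgs n t)"
proof (rule inj_onI)
  fix x y assume x: "x \<in> msgs n t" and y: "y \<in> msgs n t"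
    and eq: "restrict x {..<n} = restrict y {..<n}"
  show "x = y"
  proof
    fix i show "x i = y i"
      using x y fun_cong[OF eq, of i] by (cases "i < n") (auto simp: msgs_def)
  qed
qed

lemma restrict_msgs_subset: "(\<lambda>x. restrict x {..<n}) ` msgs n t \<subseteq> {..<n} \<rightarrow>\<^sub>E {..<2 ^ t}"
  unfolding msgs_def by (intro image_subsetI) (simp add: restrict_PiE_iff)

lemma finite_msgs: "finite (msgs n t)"
  using finite_imageD[OF finite_subset[OF restrict_msgs_subset] inj_on_restrict_msgs]
  by (simp add: finite_PiE)

lemma card_msgs_le: "card (msgs n t) \<le> 2 ^ (t * n)"
proof -
  have "card (msgs n t) \<le> card ({..<n} \<rightarrow>\<^sub>E {..<(2::nat) ^ t})"
    by (rule card_inj_on_le[OF inj_on_restrict_msgs restrict_msgs_subset]) (simp add: finite_PiE)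
  then show ?thesis
    by (simp add: card_PiE power_mult)
qed

lemma card_image_msgs_pos: "0 < card (c ` msgs n t)"
  using finite_msgs msgs_nonempty by (simp add: card_gt_0_iff)

definition confusable :: "nat \<Rightarrow> (nat \<Rightarrow> nat \<Rightarrow> bool) \<Rightarrow> (nat \<Rightarrow> nat) \<Rightarrow> (nat \<Rightarrow> nat) \<Rightarrow> bool" where
  "confusable n E x y \<longleftrightarrow> (\<exists>i<n. x i \<noteq> y i \<and> (\<forall>j<n. E i j \<longrightarrow> x j = y j))"

definition proper_colouring :: "'a set \<Rightarrow> ('a \<Rightarrow> 'a \<Rightarrow> bool) \<Rightarrow> ('a \<Rightarrow> nat) \<Rightarrow> bool" where
  "proper_colouring V R c \<longleftrightarrow> (\<forall>x\<in>V. \<forall>y\<in>V. R x y \<longrightarrow> c x \<noteq> c y)"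

lemma not_confusable_refl: "\<not> confusable n E x x"
  by (simp add: confusable_def)

lemma proper_colouring_inj: "inj_on c V \<Longrightarrow> proper_colouring V (confusable n E) c"
  unfolding proper_colouring_def inj_on_def using not_confusable_refl by metis

lemma ic_solution_imp_proper_colouring:
  assumes "ic_solution n E t P enc"
  shows "proper_colouring (msgs n t) (confusable n E) enc"
  unfolding proper_colouring_def
proof (intro ballI impI notI)
  from assms obtain D where D: "\<And>i x. i < n \<Longrightarrow> x \<in> msgs n t \<Longrightarrow> D i (enc x) (side n E i x) = x i"
    by (auto simp: ic_solution_def)
  fix x y assume x: "x \<in> msgs n t" and y: "y \<in> msgs n t" and "confusable n E x y" "enc x = enc y"
  then obtain i where i: "i < n" "x i \<noteq> y i" and nb: "\<forall>j<n. E i j \<longrightarrow> x j = y j"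
    by (auto simp: confusable_def)
  have "side n E i x = side n E i y"
    using nb by (auto simp: side_def)
  then show False
    using i(2) D[OF i(1) x] D[OF i(1) y] \<open>enc x = enc y\<close> by simp
qed

text \<open>Receiver \<open>i\<close> decodes by picking any message vector with the observed code word and side
  information; properness makes its \<open>i\<close>-th entry unique.\<close>

lemma proper_colouring_imp_ic_solution:
  assumes c: "proper_colouring (msgs n t) (confusable n E) c"
  shows "ic_solution n E t (c ` msgs n t) c"
proof -
  define D where "D i p s = (SOME y. y \<in> msgs n t \<and> c y = p \<and> side n E i y = s) i" for i p s
  have "D i (c x) (side n E i x) = x i" if i: "i < n" and x: "x \<in> msgs n t" for i x
  proof -
    define y where "y = (SOME y. y \<in> msgs n t \<and> c y = c x \<and> side n E i y = side n E i x)"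
    have y: "y \<in> msgs n t" "c y = c x" "side n E i y = side n E i x"
      using someI[of "\<lambda>y. y \<in> msgs n t \<and> c y = c x \<and> side n E i y = side n E i x" x] x
      unfolding y_def by auto
    have "\<not> confusable n E x y"
      using c x y(1,2) unfolding proper_colouring_def by metis
    moreover have "\<forall>j<n. E i j \<longrightarrow> x j = y j"
      using y(3) by (auto simp: side_def fun_eq_iff) metis
    ultimately have "y i = x i"
      using i by (auto simp: confusable_def)
    then show ?thesis
      by (simp add: D_def y_def)
  qed
  then show ?thesis
    unfolding ic_solution_def using finite_msgs by blast
qed

lemma nat_ceiling_log2_le:
  assumes "0 < k" "k \<le> 2 ^ B"
  shows "nat \<lceil>log 2 (real k)\<rceil> \<le> B"
proof -
  have "real k \<le> 2 ^ B"
    using assms(2) by (metis of_nat_le_iff of_nat_numeral of_nat_power)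
  then have "log 2 (real k) \<le> log 2 (2 ^ B)"
    using assms(1) by (intro log_mono) auto
  then show ?thesis
    by (simp add: log_nat_power nat_le_iff ceiling_le_iff)
qed

lemma le_two_power_nat_ceiling_log2:
  assumes "0 < k"
  shows "k \<le> 2 ^ nat \<lceil>log 2 (real k)\<rceil>"
proof -
  have "real k = 2 powr log 2 (real k)"
    using assms by simp
  also have "\<dots> \<le> 2 powr real (nat \<lceil>log 2 (real k)\<rceil>)"
    by (intro powr_mono) linarith+
  finally have "real k \<le> 2 ^ nat \<lceil>log 2 (real k)\<rceil>"
    by (simp add: powr_realpow)
  then show ?thesis
    by (metis of_nat_le_iff of_nat_numeral of_nat_power)
qed

lemma beta_t_le_ceiling_log_colours:
  assumes "proper_colouring (msgs n t) (confusable n E) c"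
  shows "beta_t n E t \<le> nat \<lceil>log 2 (real (card (c ` msgs n t)))\<rceil>"
  unfolding beta_t_def
  using proper_colouring_imp_ic_solution[OF assms]
  by (intro cInf_lower) (auto intro: bdd_belowI[of _ 0])

lemma beta_t_le_of_colouring:
  assumes "proper_colouring (msgs n t) (confusable n E) c" "card (c ` msgs n t) \<le> 2 ^ B"
  shows "beta_t n E t \<le> B"
  using beta_t_le_ceiling_log_colours[OF assms(1)] nat_ceiling_log2_le[OF card_image_msgs_pos assms(2)]
  by linarith

lemma optimal_colouring:
  "\<exists>c. proper_colouring (msgs n t) (confusable n E) c \<and> card (c ` msgs n t) \<le> 2 ^ beta_t n E t"
proof -
  let ?S = "{nat \<lceil>log 2 (real (card P))\<rceil> | P enc. ic_solution n E t P enc}"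
  obtain f :: "(nat \<Rightarrow> nat) \<Rightarrow> nat" where "inj_on f (msgs n t)"
    using finite_imp_inj_to_nat_seg[OF finite_msgs] by blast
  then have "?S \<noteq> {}"
    using proper_colouring_imp_ic_solution[OF proper_colouring_inj] by blast
  then have "Inf ?S \<in> ?S"
    by (rule Inf_nat_def1)
  then obtain P enc where ic: "ic_solution n E t P enc"
    and beta: "beta_t n E t = nat \<lceil>log 2 (real (card P))\<rceil>"
    unfolding beta_t_def by auto
  have "finite P" "enc ` msgs n t \<subseteq> P"
    using ic by (auto simp: ic_solution_def)
  then have "card (enc ` msgs n t) \<le> card P" "0 < card P"
    using msgs_nonempty by (auto intro: card_mono simp: card_gt_0_iff)
  then have "card (enc ` msgs n t) \<le> 2 ^ beta_t n E t"
    using le_two_power_nat_ceiling_log2 beta by (metis order_trans)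
  then show ?thesis
    using ic_solution_imp_proper_colouring[OF ic] by blast
qed

section \<open>Upper bound: colourings of OR-products\<close>

lemma proper_colouring_pair:
  assumes fA: "\<And>x. x \<in> V \<Longrightarrow> fA x \<in> VA" and fB: "\<And>x. x \<in> V \<Longrightarrow> fB x \<in> VB"
    and R: "\<And>x y. x \<in> V \<Longrightarrow> y \<in> V \<Longrightarrow> R x y \<Longrightarrow> RA (fA x) (fA y) \<or> RB (fB x) (fB y)"
    and cA: "proper_colouring VA RA cA" and cB: "proper_colouring VB RB cB"
    and fin: "finite VA" "finite VB"
  shows "\<exists>c. proper_colouring V R c \<and> card (c ` V) \<le> card (cA ` VA) * card (cB ` VB)"
proof -
  define c where "c x = prod_encode (cA (fA x), cB (fB x))" for x
  have "proper_colouring V R c"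
    unfolding proper_colouring_def
  proof (intro ballI impI)
    fix x y assume x: "x \<in> V" and y: "y \<in> V" and "R x y"
    then have "cA (fA x) \<noteq> cA (fA y) \<or> cB (fB x) \<noteq> cB (fB y)"
      using R[OF x y \<open>R x y\<close>] fA fB cA cB unfolding proper_colouring_def by blast
    then show "c x \<noteq> c y"
      by (auto simp: c_def prod_encode_eq)
  qed
  have "c ` V \<subseteq> prod_encode ` (cA ` VA \<times> cB ` VB)"
    using fA fB unfolding c_def by blast
  then have "card (c ` V) \<le> card (prod_encode ` (cA ` VA \<times> cB ` VB))"
    using fin by (intro card_mono) auto
  also have "\<dots> \<le> card (cA ` VA) * card (cB ` VB)"
    using card_image_le[of "cA ` VA \<times> cB ` VB" prod_encode] fin
    by (simp add: card_cartesian_product)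
  finally show ?thesis
    using \<open>proper_colouring V R c\<close> by blast
qed

lemma beta_t_le_add_of_confusion_map:
  assumes fA: "\<And>x. x \<in> msgs N t \<Longrightarrow> fA x \<in> msgs NA tA"
    and fB: "\<And>x. x \<in> msgs N t \<Longrightarrow> fB x \<in> msgs NB tB"
    and R: "\<And>x y. x \<in> msgs N t \<Longrightarrow> y \<in> msgs N t \<Longrightarrow> confusable N E x y \<Longrightarrow>
              confusable NA EA (fA x) (fA y) \<or> confusable NB EB (fB x) (fB y)"
  shows "beta_t N E t \<le> beta_t NA EA tA + beta_t NB EB tB"
proof -
  obtain cA where cA: "proper_colouring (msgs NA tA) (confusable NA EA) cA"
    "card (cA ` msgs NA tA) \<le> 2 ^ beta_t NA EA tA"
    using optimal_colouring[of NA tA EA] by blast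
  obtain cB where cB: "proper_colouring (msgs NB tB) (confusable NB EB) cB"
    "card (cB ` msgs NB tB) \<le> 2 ^ beta_t NB EB tB"
    using optimal_colouring[of NB tB EB] by blast
  obtain c where c: "proper_colouring (msgs N t) (confusable N E) c"
    "card (c ` msgs N t) \<le> card (cA ` msgs NA tA) * card (cB ` msgs NB tB)"
    using proper_colouring_pair[of "msgs N t" fA "msgs NA tA" fB "msgs NB tB" "confusable N E"
        "confusable NA EA" "confusable NB EB", OF fA fB R cA(1) cB(1) finite_msgs finite_msgs]
    by blast
  have "card (c ` msgs N t) \<le> 2 ^ (beta_t NA EA tA + beta_t NB EB tB)"
    using c(2) mult_le_mono[OF cA(2) cB(2)] by (simp add: power_add)
  then show ?thesis
    by (rule beta_t_le_of_colouring[OF c(1)])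
qed

section \<open>Lower bound: independence numbers\<close>

definition independent_set :: "'a set \<Rightarrow> ('a \<Rightarrow> 'a \<Rightarrow> bool) \<Rightarrow> 'a set \<Rightarrow> bool" where
  "independent_set V R S \<longleftrightarrow> S \<subseteq> V \<and> (\<forall>x\<in>S. \<forall>y\<in>S. \<not> R x y)"

definition independence_number :: "'a set \<Rightarrow> ('a \<Rightarrow> 'a \<Rightarrow> bool) \<Rightarrow> nat" where
  "independence_number V R = Max (card ` {S. independent_set V R S})"

lemma finite_card_independent_sets: "finite V \<Longrightarrow> finite (card ` {S. independent_set V R S})"
  by (rule finite_imageI, rule finite_subset[of _ "Pow V"]) (auto simp: independent_set_def)

lemma card_le_independence_number:
  "finite V \<Longrightarrow> independent_set V R S \<Longrightarrow> card S \<le> independence_number V R"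
  unfolding independence_number_def by (rule Max_ge[OF finite_card_independent_sets]) auto

lemma maximum_independent_set:
  assumes "finite V"
  obtains I where "independent_set V R I" "card I = independence_number V R"
proof -
  have "independent_set V R {}"
    by (simp add: independent_set_def)
  then have "independence_number V R \<in> card ` {S. independent_set V R S}"
    unfolding independence_number_def by (intro Max_in[OF finite_card_independent_sets[OF assms]]) blast
  then show ?thesis
    using that by auto
qed

lemma independence_number_pos:
  "finite V \<Longrightarrow> v \<in> V \<Longrightarrow> \<not> R v v \<Longrightarrow> 0 < independence_number V R"
  using card_le_independence_number[of V R "{v}"] by (simp add: independent_set_def)

lemma independence_number_msgs_pos: "0 < independence_number (msgs n t) (confusable n E)"
  using independence_number_pos[OF finite_msgs zero_in_msgs] not_confusable_refl by blast

lemma card_le_mult_independence_numbers: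
  assumes T: "T \<subseteq> VA \<times> VB" and fin: "finite VA" "finite VB"
    and no_edge: "\<And>p q. p \<in> T \<Longrightarrow> q \<in> T \<Longrightarrow> \<not> RA (fst p) (fst q) \<and> \<not> RB (snd p) (snd q)"
  shows "card T \<le> independence_number VA RA * independence_number VB RB"
proof -
  have "fst ` T \<subseteq> VA" "snd ` T \<subseteq> VB"
    using T by auto
  then have "independent_set VA RA (fst ` T)" "independent_set VB RB (snd ` T)"
    using no_edge unfolding independent_set_def by blast+
  moreover have "finite T"
    using T fin by (meson finite_SigmaI finite_subset)
  then have "card T \<le> card (fst ` T \<times> snd ` T)"
    by (intro card_mono) force+
  ultimately show ?thesis
    by (metis card_cartesian_product card_le_independence_number fin mult_le_mono order_trans)
qed

lemma card_le_colours_mult_independence_numbers: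
  fixes g :: "'b \<times> 'c \<Rightarrow> 'a"
  assumes bij: "bij_betw g (VA \<times> VB) V"
    and R: "\<And>p q. p \<in> VA \<times> VB \<Longrightarrow> q \<in> VA \<times> VB \<Longrightarrow>
              RA (fst p) (fst q) \<or> RB (snd p) (snd q) \<Longrightarrow> R (g p) (g q)"
    and c: "proper_colouring V R c" and fin: "finite VA" "finite VB"
  shows "card VA * card VB \<le> card (c ` V) * (independence_number VA RA * independence_number VB RB)"
proof -
  have finV: "finite V"
    using bij fin bij_betw_finite by blast
  have "card VA * card VB = card V"
    using bij_betw_same_card[OF bij] by (simp add: card_cartesian_product)
  also have "V = (\<Union>k\<in>c ` V. {x\<in>V. c x = k})"
    by auto
  also have "card \<dots> \<le> (\<Sum>k\<in>c ` V. card {x\<in>V. c x = k})"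
    using finV by (intro card_UN_le) auto
  also have "\<dots> \<le> (\<Sum>k\<in>c ` V. independence_number VA RA * independence_number VB RB)"
  proof (rule sum_mono)
    fix k
    define T where "T = {p \<in> VA \<times> VB. c (g p) = k}"
    have "{x\<in>V. c x = k} = g ` T" "inj_on g T"
      using bij unfolding T_def bij_betw_def by (auto intro: inj_on_subset)
    then have "card {x\<in>V. c x = k} = card T"
      by (simp add: card_image)
    also have "card T \<le> independence_number VA RA * independence_number VB RB"
    proof (rule card_le_mult_independence_numbers[OF _ fin])
      show "\<not> RA (fst p) (fst q) \<and> \<not> RB (snd p) (snd q)" if "p \<in> T" "q \<in> T" for p q
      proof -
        have "g p \<in> V" "g q \<in> V" "c (g p) = c (g q)"
          using that bij unfolding T_def bij_betw_def by auto
        then show ?thesis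
          using that R c unfolding T_def proper_colouring_def by blast
      qed
    qed (auto simp: T_def)
    finally show "card {x\<in>V. c x = k} \<le> independence_number VA RA * independence_number VB RB" .
  qed
  finally show ?thesis
    by simp
qed

section \<open>Covering by translates of an independent set\<close>

lemma mult_one_minus_power_less_one:
  fixes N a :: real
  assumes "0 < a" "a \<le> N" "N / a * (ln N + 1) \<le> s"
  shows "N * (1 - a / N) ^ s < 1"
proof -
  define p where "p = a / N"
  have N: "0 < N"
    using assms by linarith
  have "(1 - p) ^ s \<le> exp (- p) ^ s"
    using assms N exp_ge_add_one_self[of "-p"] by (intro power_mono) (auto simp: p_def)
  also have "\<dots> = exp (- (s * p))"
    by (simp flip: exp_of_nat_mult)
  also have "\<dots> \<le> exp (- (ln N + 1))"
  proof -
    have "p * (N / a * (ln N + 1)) \<le> p * s"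
      using assms N by (intro mult_left_mono) (auto simp: p_def)
    then show ?thesis
      using assms N by (simp add: p_def field_simps)
  qed
  also have "\<dots> = exp (-1) / N"
    using N by (simp add: exp_diff exp_minus field_simps)
  finally have "N * (1 - p) ^ s \<le> exp (-1)"
    using N by (simp add: field_simps)
  also have "exp (-1) < (1::real)"
    by simp
  finally show ?thesis
    by (simp add: p_def)
qed

text \<open>Colour \<open>x\<close> by the index of the first translate containing it: the class of that colour lies
  in a translate of \<open>I\<close>, which is independent because translations preserve non-adjacency.\<close>

lemma proper_colouring_of_cover:
  assumes cover: "V \<subseteq> (\<Union>g\<in>set gs. act g ` I)" and gs: "set gs \<subseteq> V"
    and I: "independent_set V R I"
    and invariant: "\<And>g x y. g \<in> V \<Longrightarrow> x \<in> V \<Longrightarrow> y \<in> V \<Longrightarrow> R (act g x) (act g y) \<Longrightarrow> R x y"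
  shows "\<exists>c. proper_colouring V R c \<and> card (c ` V) \<le> length gs"
proof -
  define c where "c x = (LEAST j. j < length gs \<and> x \<in> act (gs ! j) ` I)" for x
  have c: "c x < length gs \<and> x \<in> act (gs ! c x) ` I" if x: "x \<in> V" for x
  proof -
    obtain g where "g \<in> set gs" "x \<in> act g ` I"
      using cover x by blast
    then have "\<exists>j. j < length gs \<and> x \<in> act (gs ! j) ` I"
      by (metis in_set_conv_nth)
    then show ?thesis
      unfolding c_def by (rule LeastI_ex)
  qed
  have "proper_colouring V R c"
    unfolding proper_colouring_def
  proof (intro ballI impI notI)
    fix x y assume x: "x \<in> V" and y: "y \<in> V" and "R x y" "c x = c y"
    define g where "g = gs ! c x"
    have "g \<in> V"
      using c[OF x] gs by (auto simp: g_def)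
    obtain x' y' where "x' \<in> I" "act g x' = x" "y' \<in> I" "act g y' = y"
      using c[OF x] c[OF y] \<open>c x = c y\<close> unfolding g_def by (metis imageE)
    moreover have "x' \<in> V" "y' \<in> V"
      using I \<open>x' \<in> I\<close> \<open>y' \<in> I\<close> by (auto simp: independent_set_def)
    ultimately have "R x' y'"
      using invariant[OF \<open>g \<in> V\<close>] \<open>R x y\<close> by blast
    then show False
      using I \<open>x' \<in> I\<close> \<open>y' \<in> I\<close> by (auto simp: independent_set_def)
  qed
  moreover have "c ` V \<subseteq> {..<length gs}"
    using c by auto
  then have "card (c ` V) \<le> length gs"
    using card_mono[of "{..<length gs}"] by fastforce
  ultimately show ?thesis
    by blast
qed

locale sharply_transitive =
  fixes V :: "'a set" and act :: "'a \<Rightarrow> 'a \<Rightarrow> 'a"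
  assumes finite_V: "finite V" and V_nonempty: "V \<noteq> {}"
    and inj_act: "g \<in> V \<Longrightarrow> inj_on (act g) V"
    and unique_act: "u \<in> V \<Longrightarrow> w \<in> V \<Longrightarrow> \<exists>!g. g \<in> V \<and> act g w = u"
begin

lemma card_transporters: "u \<in> V \<Longrightarrow> w \<in> V \<Longrightarrow> card {g \<in> V. act g w = u} = 1"
  using unique_act[of u w] by (auto simp: card_1_singleton_iff)

lemma sum_card_translate_Int:
  assumes "I \<subseteq> V" "U \<subseteq> V"
  shows "(\<Sum>g\<in>V. card (act g ` I \<inter> U)) = card I * card U"
proof -
  have finI: "finite I" and finU: "finite U"
    using assms finite_V finite_subset by auto
  have "card (act g ` I \<inter> U) = (\<Sum>w\<in>I. of_bool (act g w \<in> U))" if "g \<in> V" for g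
  proof -
    have "act g ` I \<inter> U = act g ` (I \<inter> {w. act g w \<in> U})"
      by blast
    moreover have "inj_on (act g) (I \<inter> {w. act g w \<in> U})"
      using inj_act[OF that] assms by (blast intro: inj_on_subset)
    ultimately show ?thesis
      using finI by (simp add: card_image)
  qed
  then have "(\<Sum>g\<in>V. card (act g ` I \<inter> U)) = (\<Sum>g\<in>V. \<Sum>w\<in>I. of_bool (act g w \<in> U))"
    by (rule sum.cong[OF refl])
  also have "\<dots> = (\<Sum>w\<in>I. \<Sum>g\<in>V. of_bool (act g w \<in> U))"
    by (rule sum.swap)
  also have "\<dots> = (\<Sum>w\<in>I. card U)"
  proof (rule sum.cong[OF refl])
    fix w assume "w \<in> I"
    have "V \<inter> {g. act g w \<in> U} = (\<Union>u\<in>U. {g \<in> V. act g w = u})"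
      by blast
    then have "(\<Sum>g\<in>V. of_bool (act g w \<in> U)) = card (\<Union>u\<in>U. {g \<in> V. act g w = u})"
      using finite_V by simp
    also have "\<dots> = (\<Sum>u\<in>U. card {g \<in> V. act g w = u})"
      using finU finite_V by (intro card_UN_disjoint) auto
    also have "\<dots> = (\<Sum>u\<in>U. 1)"
      using card_transporters assms \<open>w \<in> I\<close> by (intro sum.cong) auto
    finally show "(\<Sum>g\<in>V. of_bool (act g w \<in> U)) = card U"
      by simp
  qed
  finally show ?thesis
    by simp
qed

lemma exists_translate_Int_ge:
  assumes "I \<subseteq> V" "U \<subseteq> V"
  obtains g where "g \<in> V" "card I * card U \<le> card (act g ` I \<inter> U) * card V"
proof -
  have "\<exists>g\<in>V. card I * card U \<le> card (act g ` I \<inter> U) * card V"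
  proof (rule ccontr)
    assume "\<not> ?thesis"
    then have "(\<Sum>g\<in>V. card (act g ` I \<inter> U) * card V) < (\<Sum>g\<in>V. card I * card U)"
      using finite_V V_nonempty by (intro sum_strict_mono) (auto simp: not_le)
    then show False
      using sum_card_translate_Int[OF assms] by (simp flip: sum_distrib_right)
  qed
  then show ?thesis
    using that by blast
qed

lemma translates_cover_all_but:
  assumes "I \<subseteq> V"
  shows "\<exists>gs. set gs \<subseteq> V \<and> length gs = s \<and>
    real (card (V - (\<Union>g\<in>set gs. act g ` I))) \<le> card V * (1 - card I / card V) ^ s"
proof (induction s)
  case 0
  show ?case
    by (rule exI[of _ "[]"]) (simp add: card_mono finite_V)
next
  case (Suc s)
  then obtain gs where gs: "set gs \<subseteq> V" "length gs = s"
    and le: "real (card (V - (\<Union>g\<in>set gs. act g ` I))) \<le> card V * (1 - card I / card V) ^ s"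
    by blast
  define U where "U = V - (\<Union>g\<in>set gs. act g ` I)"
  have "U \<subseteq> V"
    by (auto simp: U_def)
  then obtain g where g: "g \<in> V" and large: "card I * card U \<le> card (act g ` I \<inter> U) * card V"
    using exists_translate_Int_ge[OF assms] by blast
  have finU: "finite U"
    using \<open>U \<subseteq> V\<close> finite_V finite_subset by blast
  have N: "real (card V) > 0"
    using finite_V V_nonempty by (simp add: card_gt_0_iff)
  have "card I \<le> card V"
    using assms finite_V by (rule card_mono[rotated])
  then have p: "0 \<le> 1 - card I / card V"
    using N by (simp add: field_simps)
  have "real (card I) * card U / card V \<le> card (act g ` I \<inter> U)"
    using large N by (simp add: field_simps) (metis of_nat_le_iff of_nat_mult)
  moreover have "card (U - act g ` I) = real (card U) - card (act g ` I \<inter> U)"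
    using finU by (simp add: card_Diff_subset_Int of_nat_diff card_mono Diff_Int2 Int_commute)
  ultimately have "card (U - act g ` I) \<le> card U * (1 - card I / card V)"
    by (simp add: field_simps)
  also have "\<dots> \<le> card V * (1 - card I / card V) ^ s * (1 - card I / card V)"
    using le p unfolding U_def by (rule mult_right_mono)
  also have "U - act g ` I = V - (\<Union>h\<in>set (g # gs). act h ` I)"
    by (auto simp: U_def)
  finally have "card (V - (\<Union>h\<in>set (g # gs). act h ` I)) \<le> card V * (1 - card I / card V) ^ Suc s"
    by (simp add: mult_ac)
  then show ?case
    using gs g by (intro exI[of _ "g # gs"]) auto
qed


lemma colouring_by_translates:
  assumes I: "independent_set V R I" "I \<noteq> {}"
    and invariant: "\<And>g x y. g \<in> V \<Longrightarrow> x \<in> V \<Longrightarrow> y \<in> V \<Longrightarrow> R (act g x) (act g y) \<Longrightarrow> R x y"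
  shows "\<exists>c. proper_colouring V R c \<and> card (c ` V) \<le> card V / card I * (ln (card V) + 2)"
proof -
  define N a where "N = real (card V)" and "a = real (card I)"
  have "I \<subseteq> V"
    using I by (simp add: independent_set_def)
  then have a: "0 < a" "a \<le> N"
    using I finite_V by (auto simp: N_def a_def card_gt_0_iff card_mono finite_subset)
  have lnN: "0 \<le> ln N"
    using finite_V V_nonempty by (simp add: N_def Suc_le_eq card_gt_0_iff)
  define s where "s = nat \<lceil>N / a * (ln N + 1)\<rceil>"
  obtain gs where gs: "set gs \<subseteq> V" "length gs = s"
    and uncovered: "card (V - (\<Union>g\<in>set gs. act g ` I)) \<le> N * (1 - a / N) ^ s"
    using translates_cover_all_but[OF \<open>I \<subseteq> V\<close>] unfolding N_def a_def by blast
  have "N * (1 - a / N) ^ s < 1"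
    using a real_nat_ceiling_ge[of "N / a * (ln N + 1)"]
    by (intro mult_one_minus_power_less_one) (auto simp: s_def)
  then have "card (V - (\<Union>g\<in>set gs. act g ` I)) = 0"
    using uncovered by linarith
  then have "V \<subseteq> (\<Union>g\<in>set gs. act g ` I)"
    using finite_V by auto
  then have "\<exists>c. proper_colouring V R c \<and> card (c ` V) \<le> length gs"
    using gs(1) I(1) invariant by (rule proper_colouring_of_cover)
  then obtain c where "proper_colouring V R c" "card (c ` V) \<le> s"
    using gs(2) by auto
  moreover have "real s \<le> N / a * (ln N + 2)"
  proof -
    have "real s \<le> N / a * (ln N + 1) + 1"
      using a lnN of_int_ceiling_le_add_one[of "N / a * (ln N + 1)"] unfolding s_def by simp
    moreover have "1 \<le> N / a"
      using a by simp
    moreover have "N / a * (ln N + 2) = N / a * (ln N + 1) + N / a"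
      by (simp add: distrib_left)
    ultimately show ?thesis
      by linarith
  qed
  ultimately show ?thesis
    unfolding N_def a_def by (metis of_nat_le_iff order_trans)
qed

end

definition translate :: "(nat \<Rightarrow> nat) \<Rightarrow> (nat \<Rightarrow> nat) \<Rightarrow> (nat \<Rightarrow> nat)" where
  "translate g x = (\<lambda>i. xor (x i) (g i))"

lemma xor_less_two_power: "a < 2 ^ t \<Longrightarrow> b < 2 ^ t \<Longrightarrow> xor a b < (2::nat) ^ t"
  by (metis take_bit_nat_eq_self_iff take_bit_xor)

lemma translate_eq_iff: "translate g x = u \<longleftrightarrow> g = translate x u"
  by (auto simp: translate_def fun_eq_iff xor.assoc) (metis xor.assoc xor.comm_neutral xor_self_eq xor.commute)+

lemma translate_in_msgs: "g \<in> msgs n t \<Longrightarrow> x \<in> msgs n t \<Longrightarrow> translate g x \<in> msgs n t"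
  by (simp add: msgs_def translate_def xor_less_two_power)

lemma sharply_transitive_translate: "sharply_transitive (msgs n t) translate"
proof
  show "inj_on (translate g) (msgs n t)" for g
    by (rule inj_onI) (metis translate_eq_iff)
  show "\<exists>!g. g \<in> msgs n t \<and> translate g w = u" if "u \<in> msgs n t" "w \<in> msgs n t" for u w
    using that translate_in_msgs[of w n t u] by (metis translate_eq_iff)
qed (simp_all add: finite_msgs msgs_nonempty)

lemma confusable_translate_iff:
  "confusable n E (translate g x) (translate g y) \<longleftrightarrow> confusable n E x y"
proof -
  have "xor (x j) (g j) = xor (y j) (g j) \<longleftrightarrow> x j = y j" for j
    by (metis translate_def translate_eq_iff)
  then show ?thesis
    by (simp add: confusable_def translate_def)
qed

lemma colouring_by_independent_set:
  "\<exists>c. proper_colouring (msgs n t) (confusable n E) c \<and>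
     card (c ` msgs n t) \<le> card (msgs n t) / independence_number (msgs n t) (confusable n E)
                                * (ln (card (msgs n t)) + 2)"
proof -
  obtain I where I: "independent_set (msgs n t) (confusable n E) I"
    "card I = independence_number (msgs n t) (confusable n E)"
    using maximum_independent_set[OF finite_msgs] by blast
  then have "I \<noteq> {}"
    using independence_number_msgs_pos[of n t E] by auto
  then show ?thesis
    using sharply_transitive.colouring_by_translates[OF sharply_transitive_translate I(1)]
      confusable_translate_iff I(2) by auto
qed

lemma beta_t_le_log_independence_number:
  "beta_t n E t \<le> log 2 (card (msgs n t) / independence_number (msgs n t) (confusable n E))
                   + log 2 (real t * real n + 2) + 1"
proof -
  define M a where "M = real (card (msgs n t))"
    and "a = real (independence_number (msgs n t) (confusable n E))"
  obtain c where c: "proper_colouring (msgs n t) (confusable n E) c"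
    "card (c ` msgs n t) \<le> M / a * (ln M + 2)"
    using colouring_by_independent_set unfolding M_def a_def by blast
  define k where "k = real (card (c ` msgs n t))"
  have k: "1 \<le> k"
    using card_image_msgs_pos[of c n t] unfolding k_def by linarith
  have a: "1 \<le> a"
    using independence_number_msgs_pos[of n t E] unfolding a_def by linarith
  have M: "1 \<le> M"
    using card_msgs_le[of n t] finite_msgs[of n t] msgs_nonempty[of n t]
    unfolding M_def by (simp add: Suc_le_eq card_gt_0_iff)
  have lnM: "ln M \<le> real t * real n"
  proof -
    have "M \<le> 2 ^ (t * n)"
      using card_msgs_le[of n t] unfolding M_def by (metis of_nat_le_iff of_nat_numeral of_nat_power)
    then have "ln M \<le> real (t * n) * ln 2"
      using M by (simp add: ln_realpow flip: ln_le_cancel_iff)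
    also have "\<dots> \<le> real (t * n)"
      using ln_2_less_1 by (intro mult_left_le) auto
    finally show ?thesis
      by simp
  qed
  have lnM_pos: "0 < ln M + 2"
    using ln_ge_zero[OF M] by linarith
  have "real (beta_t n E t) \<le> real (nat \<lceil>log 2 k\<rceil>)"
    using beta_t_le_ceiling_log_colours[OF c(1)] unfolding k_def by simp
  also have "\<dots> \<le> log 2 k + 1"
    using k by simp
  also have "log 2 k \<le> log 2 (M / a * (ln M + 2))"
    using k c(2) unfolding k_def by (intro log_mono) auto
  also have "\<dots> = log 2 (M / a) + log 2 (ln M + 2)"
  proof (rule log_mult_pos)
    show "0 < M / a"
      using M a by simp
    show "0 < ln M + 2"
      using lnM_pos .
  qed
  also have "log 2 (ln M + 2) \<le> log 2 (real t * real n + 2)"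
    using lnM lnM_pos by (intro log_mono) auto
  finally show ?thesis
    unfolding M_def a_def by linarith
qed

lemma log_independence_numbers_le_beta_t:
  fixes g :: "(nat \<Rightarrow> nat) \<times> (nat \<Rightarrow> nat) \<Rightarrow> (nat \<Rightarrow> nat)"
  assumes bij: "bij_betw g (msgs NA t \<times> msgs NB t) (msgs N t)"
    and R: "\<And>p q. p \<in> msgs NA t \<times> msgs NB t \<Longrightarrow> q \<in> msgs NA t \<times> msgs NB t \<Longrightarrow>
              confusable NA EA (fst p) (fst q) \<or> confusable NB EB (snd p) (snd q) \<Longrightarrow>
              confusable N E (g p) (g q)"
  shows "log 2 (card (msgs NA t) / independence_number (msgs NA t) (confusable NA EA))
       + log 2 (card (msgs NB t) / independence_number (msgs NB t) (confusable NB EB))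
       \<le> beta_t N E t"
proof -
  define MA MB aA aB where "MA = real (card (msgs NA t))" and "MB = real (card (msgs NB t))"
    and "aA = real (independence_number (msgs NA t) (confusable NA EA))"
    and "aB = real (independence_number (msgs NB t) (confusable NB EB))"
  obtain c where c: "proper_colouring (msgs N t) (confusable N E) c"
    "card (c ` msgs N t) \<le> 2 ^ beta_t N E t"
    using optimal_colouring[of N t E] by blast
  have "MA * MB \<le> card (c ` msgs N t) * (aA * aB)"
    using card_le_colours_mult_independence_numbers[of g "msgs NA t" "msgs NB t" "msgs N t"
        "confusable NA EA" "confusable NB EB" "confusable N E", OF bij R c(1) finite_msgs finite_msgs]
    unfolding MA_def MB_def aA_def aB_def by (metis of_nat_le_iff of_nat_mult)
  moreover have "1 \<le> aA" "1 \<le> aB"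
    using independence_number_msgs_pos unfolding aA_def aB_def by (simp_all add: Suc_le_eq)
  moreover have "0 < MA" "0 < MB"
    using finite_msgs msgs_nonempty unfolding MA_def MB_def by (simp_all add: card_gt_0_iff)
  ultimately have "log 2 (MA / aA) + log 2 (MB / aB) \<le> log 2 (card (c ` msgs N t))"
    by (simp add: log_mult_pos[symmetric] log_mono field_simps)
  also have "\<dots> \<le> log 2 (2 ^ beta_t N E t)"
    using c(2) card_image_msgs_pos[of c N t] by (intro log_mono) (auto simp flip: of_nat_le_iff)
  finally show ?thesis
    unfolding MA_def MB_def aA_def aB_def by (simp add: log_nat_power)
qed

text \<open>The graph \<open>E\<close> on \<open>[N]\<close> is the disjoint union of \<open>EA\<close> on \<open>[NA]\<close> and \<open>EB\<close> on \<open>[NB]\<close>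
  up to relabelling: \<open>in_A\<close> selects the vertices of the first part, \<open>idx\<close> renumbers both parts,
  and \<open>emb_A\<close>, \<open>emb_B\<close> are the inverse renumberings.\<close>

locale vertex_split =
  fixes N NA NB :: nat and E EA EB :: "nat \<Rightarrow> nat \<Rightarrow> bool"
    and in_A :: "nat \<Rightarrow> bool" and idx emb_A emb_B :: "nat \<Rightarrow> nat"
  assumes emb_A: "i < NA \<Longrightarrow> emb_A i < N \<and> in_A (emb_A i) \<and> idx (emb_A i) = i"
    and emb_B: "i < NB \<Longrightarrow> emb_B i < N \<and> \<not> in_A (emb_B i) \<and> idx (emb_B i) = i"
    and idx_A: "k < N \<Longrightarrow> in_A k \<Longrightarrow> idx k < NA \<and> emb_A (idx k) = k"
    and idx_B: "k < N \<Longrightarrow> \<not> in_A k \<Longrightarrow> idx k < NB \<and> emb_B (idx k) = k"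
    and edge_iff: "k < N \<Longrightarrow> l < N \<Longrightarrow>
      E k l \<longleftrightarrow> in_A k \<and> in_A l \<and> EA (idx k) (idx l) \<or> \<not> in_A k \<and> \<not> in_A l \<and> EB (idx k) (idx l)"
begin

definition join :: "(nat \<Rightarrow> nat) \<times> (nat \<Rightarrow> nat) \<Rightarrow> nat \<Rightarrow> nat" where
  "join p k = (if k < N then if in_A k then fst p (idx k) else snd p (idx k) else 0)"

definition split :: "(nat \<Rightarrow> nat) \<Rightarrow> (nat \<Rightarrow> nat) \<times> (nat \<Rightarrow> nat)" where
  "split x = ((\<lambda>i. if i < NA then x (emb_A i) else 0), (\<lambda>i. if i < NB then x (emb_B i) else 0))"

lemma ex_vertex_iff: "(\<exists>k<N. P k) \<longleftrightarrow> (\<exists>i<NA. P (emb_A i)) \<or> (\<exists>i<NB. P (emb_B i))"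
  using emb_A emb_B idx_A idx_B by metis

lemma all_vertex_iff: "(\<forall>k<N. P k) \<longleftrightarrow> (\<forall>i<NA. P (emb_A i)) \<and> (\<forall>i<NB. P (emb_B i))"
  using ex_vertex_iff[of "\<lambda>k. \<not> P k"] by blast

lemma edge_emb_iff:
  "i < NA \<Longrightarrow> j < NA \<Longrightarrow> E (emb_A i) (emb_A j) \<longleftrightarrow> EA i j"
  "i < NB \<Longrightarrow> j < NB \<Longrightarrow> E (emb_B i) (emb_B j) \<longleftrightarrow> EB i j"
  "i < NA \<Longrightarrow> j < NB \<Longrightarrow> \<not> E (emb_A i) (emb_B j)"
  "i < NB \<Longrightarrow> j < NA \<Longrightarrow> \<not> E (emb_B i) (emb_A j)"
  using edge_iff emb_A emb_B by auto

lemma join_emb: "i < NA \<Longrightarrow> join p (emb_A i) = fst p i" "i < NB \<Longrightarrow> join p (emb_B i) = snd p i"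
  using emb_A emb_B by (auto simp: join_def)

lemma confusable_join_iff:
  "confusable N E (join p) (join q) \<longleftrightarrow> confusable NA EA (fst p) (fst q) \<or> confusable NB EB (snd p) (snd q)"
  unfolding confusable_def ex_vertex_iff all_vertex_iff
  by (auto simp: edge_emb_iff join_emb cong: conj_cong)

lemma split_in_msgs: "x \<in> msgs N t \<Longrightarrow> split x \<in> msgs NA t \<times> msgs NB t"
  using emb_A emb_B by (auto simp: split_def msgs_def)

lemma join_split: "x \<in> msgs N t \<Longrightarrow> join (split x) = x"
  using idx_A idx_B by (auto simp: join_def split_def msgs_def fun_eq_iff)

lemma bij_betw_join: "bij_betw join (msgs NA t \<times> msgs NB t) (msgs N t)"
proof (rule bij_betw_byWitness[of _ split])
  show "\<forall>p\<in>msgs NA t \<times> msgs NB t. split (join p) = p"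
    using emb_A emb_B by (auto simp: join_def split_def msgs_def fun_eq_iff)
  show "join ` (msgs NA t \<times> msgs NB t) \<subseteq> msgs N t"
    using idx_A idx_B by (auto simp: join_def msgs_def)
  show "split ` msgs N t \<subseteq> msgs NA t \<times> msgs NB t"
    using split_in_msgs by blast
qed (use join_split in blast)

lemma beta_t_le_add: "beta_t N E t \<le> beta_t NA EA t + beta_t NB EB t"
proof (rule beta_t_le_add_of_confusion_map[where fA = "\<lambda>x. fst (split x)" and fB = "\<lambda>x. snd (split x)"])
  show "fst (split x) \<in> msgs NA t" "snd (split x) \<in> msgs NB t" if "x \<in> msgs N t" for x
    using split_in_msgs[OF that] by auto
  show "confusable NA EA (fst (split x)) (fst (split y)) \<or> confusable NB EB (snd (split x)) (snd (split y))"
    if "x \<in> msgs N t" "y \<in> msgs N t" "confusable N E x y" for x y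
    using that confusable_join_iff[of "split x" "split y"] by (simp add: join_split)
qed

lemma beta_t_add_le:
  "real (beta_t NA EA t) + real (beta_t NB EB t)
     \<le> real (beta_t N E t) + 2 + log 2 (real t * real NA + 2) + log 2 (real t * real NB + 2)"
proof -
  have "log 2 (card (msgs NA t) / independence_number (msgs NA t) (confusable NA EA))
       + log 2 (card (msgs NB t) / independence_number (msgs NB t) (confusable NB EB))
       \<le> beta_t N E t"
    by (rule log_independence_numbers_le_beta_t[OF bij_betw_join]) (simp add: confusable_join_iff)
  then show ?thesis
    using beta_t_le_log_independence_number[of NA EA t] beta_t_le_log_independence_number[of NB EB t]
    by linarith
qed

end

section \<open>Subadditivity in the alphabet and in the number of copies\<close>

lemma beta_t_alphabet_subadditive: "beta_t n E (a + b) \<le> beta_t n E a + beta_t n E b"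
proof (rule beta_t_le_add_of_confusion_map[where fA = "\<lambda>x i. x i mod 2 ^ a" and fB = "\<lambda>x i. x i div 2 ^ a"])
  show "(\<lambda>i. x i mod 2 ^ a) \<in> msgs n a" "(\<lambda>i. x i div 2 ^ a) \<in> msgs n b" if "x \<in> msgs n (a + b)" for x
    using that by (auto simp: msgs_def power_add less_mult_imp_div_less mult.commute)
  show "confusable n E (\<lambda>i. x i mod 2 ^ a) (\<lambda>i. y i mod 2 ^ a) \<or> confusable n E (\<lambda>i. x i div 2 ^ a) (\<lambda>i. y i div 2 ^ a)"
    if conf: "confusable n E x y" for x y :: "nat \<Rightarrow> nat"
  proof -
    obtain i where i: "i < n" "x i \<noteq> y i" and nb: "\<forall>j<n. E i j \<longrightarrow> x j = y j"
      using conf by (auto simp: confusable_def)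
    have "x i mod 2 ^ a \<noteq> y i mod 2 ^ a \<or> x i div 2 ^ a \<noteq> y i div 2 ^ a"
      using i(2) by (metis div_mult_mod_eq)
    then show ?thesis
      using i(1) nb by (auto simp: confusable_def)
  qed
qed

lemma mult_le_of_subadditive:
  fixes f :: "nat \<Rightarrow> nat"
  assumes "\<And>a b. f (a + b) \<le> f a + f b" and "1 \<le> k"
  shows "f (k * t) \<le> k * f t"
  using \<open>1 \<le> k\<close>
proof (induction k rule: dec_induct)
  case (step k)
  then show ?case
    using assms(1)[of t "k * t"] by simp
qed simp

lemma vertex_split_dunion:
  "vertex_split (n + m) n m (dunion n E m F) E F (\<lambda>k. k < n) (\<lambda>k. if k < n then k else k - n)
     (\<lambda>i. i) (\<lambda>i. i + n)"
  by unfold_locales (auto simp: dunion_def)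

lemma beta_t_dunion_le: "beta_t (n + m) (dunion n E m F) t \<le> beta_t n E t + beta_t m F t"
  using vertex_split.beta_t_le_add[OF vertex_split_dunion] .

lemma beta_t_dunion_ge:
  "real (beta_t n E t) + real (beta_t m F t)
     \<le> real (beta_t (n + m) (dunion n E m F) t) + 2 + log 2 (real t * real n + 2) + log 2 (real t * real m + 2)"
  using vertex_split.beta_t_add_le[OF vertex_split_dunion] .

lemma copies_add: "copies (a + b) N D = dunion (a * N) (copies a N D) (b * N) (copies b N D)"
proof (intro ext)
  fix i j
  show "copies (a + b) N D i j = dunion (a * N) (copies a N D) (b * N) (copies b N D) i j"
  proof (cases "N = 0")
    case False
    have block: "k < a * N \<longleftrightarrow> k div N < a" for k
      using False by (simp add: div_less_iff_less_mult)
    consider "i < a * N" "j < a * N" | "i < a * N \<longleftrightarrow> \<not> j < a * N" | "a * N \<le> i" "a * N \<le> j"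
      by (meson not_less)
    then show ?thesis
    proof cases
      case 2
      then have "i div N \<noteq> j div N"
        unfolding block by auto
      then show ?thesis
        using 2 by (auto simp: copies_def dunion_def)
    next
      case 3
      then obtain i' j' where "i = i' + a * N" "j = j' + a * N"
        by (metis add.commute le_add_diff_inverse)
      then show ?thesis
        using False by (simp add: copies_def dunion_def add_mult_distrib) blast
    qed (simp add: copies_def dunion_def add_mult_distrib)
  qed (simp add: copies_def dunion_def)
qed

definition beta_copies :: "nat \<Rightarrow> (nat \<Rightarrow> nat \<Rightarrow> bool) \<Rightarrow> nat \<Rightarrow> nat" where
  "beta_copies n E t = beta_t (t * n) (copies t n E) 1"

lemma beta_copies_subadditive: "beta_copies n E (a + b) \<le> beta_copies n E a + beta_copies n E b"
  unfolding beta_copies_def copies_add add_mult_distrib by (rule beta_t_dunion_le)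

text \<open>Vertex \<open>k\<close> of \<open>t \<cdot> (G + H)\<close> is vertex \<open>k mod (n + m)\<close> of copy \<open>k div (n + m)\<close> of \<open>G + H\<close>;
  these maps identify \<open>t \<cdot> (G + H)\<close> with \<open>t \<cdot> G + t \<cdot> H\<close>.\<close>

definition in_left_block :: "nat \<Rightarrow> nat \<Rightarrow> nat \<Rightarrow> bool" where
  "in_left_block n m k \<longleftrightarrow> k mod (n + m) < n"

definition block_index :: "nat \<Rightarrow> nat \<Rightarrow> nat \<Rightarrow> nat" where
  "block_index n m k = (if in_left_block n m k then k div (n + m) * n + k mod (n + m)
                        else k div (n + m) * m + (k mod (n + m) - n))"

definition left_block_vertex :: "nat \<Rightarrow> nat \<Rightarrow> nat \<Rightarrow> nat" where
  "left_block_vertex n m i = i div n * (n + m) + i mod n"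

definition right_block_vertex :: "nat \<Rightarrow> nat \<Rightarrow> nat \<Rightarrow> nat" where
  "right_block_vertex n m i = i div m * (n + m) + (n + i mod m)"

lemma mult_add_less_mult: "q < t \<Longrightarrow> r < P \<Longrightarrow> q * P + r < t * (P::nat)"
  using mult_le_mono1[of "Suc q" t P] by simp

lemma block_index_left:
  assumes "k < t * (n + m)" "in_left_block n m k"
  shows "block_index n m k < t * n" "block_index n m k div n = k div (n + m)"
    "block_index n m k mod n = k mod (n + m)"
proof -
  have "0 < n + m"
    using assms by (cases "n + m") auto
  then have "k div (n + m) < t" "k mod (n + m) < n"
    using assms by (simp_all add: div_less_iff_less_mult in_left_block_def)
  then show "block_index n m k < t * n" "block_index n m k div n = k div (n + m)"
    "block_index n m k mod n = k mod (n + m)"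
    using assms(2) by (simp_all add: block_index_def mult_add_less_mult)
qed

lemma block_index_right:
  assumes "k < t * (n + m)" "\<not> in_left_block n m k"
  shows "block_index n m k < t * m" "block_index n m k div m = k div (n + m)"
    "block_index n m k mod m = k mod (n + m) - n" "n \<le> k mod (n + m)"
proof -
  have "0 < n + m"
    using assms by (cases "n + m") auto
  define r where "r = k mod (n + m) - n"
  have "k div (n + m) < t" "r < m" "n \<le> k mod (n + m)"
    using assms mod_less_divisor[OF \<open>0 < n + m\<close>, of k]
    by (simp_all add: r_def div_less_iff_less_mult in_left_block_def)
  moreover have "block_index n m k = k div (n + m) * m + r"
    using assms(2) by (simp add: block_index_def r_def)
  ultimately have "block_index n m k < t * m" "block_index n m k div m = k div (n + m)"
    "block_index n m k mod m = r"
    by (simp_all add: mult_add_less_mult)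
  then show "block_index n m k < t * m" "block_index n m k div m = k div (n + m)"
    "block_index n m k mod m = k mod (n + m) - n"
    by (simp_all add: r_def)
  show "n \<le> k mod (n + m)"
    by fact
qed

lemma vertex_split_copies_dunion:
  "vertex_split (t * (n + m)) (t * n) (t * m) (copies t (n + m) (dunion n E m F))
     (copies t n E) (copies t m F) (in_left_block n m) (block_index n m)
     (left_block_vertex n m) (right_block_vertex n m)"
proof
  fix i assume i: "i < t * n"
  have "0 < n"
    using i by (cases n) auto
  then have q: "i div n < t" and r: "i mod n < n"
    using i by (simp_all add: div_less_iff_less_mult)
  then have "left_block_vertex n m i div (n + m) = i div n" "left_block_vertex n m i mod (n + m) = i mod n"
    by (simp_all add: left_block_vertex_def)
  then show "left_block_vertex n m i < t * (n + m) \<and> in_left_block n m (left_block_vertex n m i)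
      \<and> block_index n m (left_block_vertex n m i) = i"
    using q r by (simp add: left_block_vertex_def in_left_block_def block_index_def mult_add_less_mult)
next
  fix i assume i: "i < t * m"
  have "0 < m"
    using i by (cases m) auto
  then have q: "i div m < t" and r: "n + i mod m < n + m"
    using i by (simp_all add: div_less_iff_less_mult)
  then have "right_block_vertex n m i div (n + m) = i div m"
    "right_block_vertex n m i mod (n + m) = n + i mod m"
    by (simp_all add: right_block_vertex_def)
  then show "right_block_vertex n m i < t * (n + m) \<and> \<not> in_left_block n m (right_block_vertex n m i)
      \<and> block_index n m (right_block_vertex n m i) = i"
    using q r by (simp add: right_block_vertex_def in_left_block_def block_index_def mult_add_less_mult)
next
  fix k assume "k < t * (n + m)" "in_left_block n m k"
  then show "block_index n m k < t * n \<and> left_block_vertex n m (block_index n m k) = k"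
    using block_index_left[of k t n m] by (simp add: left_block_vertex_def div_mult_mod_eq)
next
  fix k assume "k < t * (n + m)" "\<not> in_left_block n m k"
  then show "block_index n m k < t * m \<and> right_block_vertex n m (block_index n m k) = k"
    using block_index_right[of k t n m] by (simp add: right_block_vertex_def div_mult_mod_eq)
next
  fix k l assume k: "k < t * (n + m)" and l: "l < t * (n + m)"
  have "n + m > 0"
    using k by (cases "n + m") auto
  then have "k mod (n + m) < n + m" "l mod (n + m) < n + m"
    by simp_all
  then show "copies t (n + m) (dunion n E m F) k l \<longleftrightarrow>
      in_left_block n m k \<and> in_left_block n m l \<and> copies t n E (block_index n m k) (block_index n m l)
    \<or> \<not> in_left_block n m k \<and> \<not> in_left_block n m l \<and> copies t m F (block_index n m k) (block_index n m l)"
    using k l block_index_left[OF k] block_index_left[OF l] block_index_right[OF k] block_index_right[OF l]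
    by (cases "in_left_block n m k"; cases "in_left_block n m l")
      (auto simp: copies_def dunion_def in_left_block_def)
qed

lemma beta_copies_dunion_le:
  "beta_copies (n + m) (dunion n E m F) t \<le> beta_copies n E t + beta_copies m F t"
  unfolding beta_copies_def
  using vertex_split.beta_t_le_add[OF vertex_split_copies_dunion] .

lemma beta_copies_dunion_ge:
  "real (beta_copies n E t) + real (beta_copies m F t)
     \<le> real (beta_copies (n + m) (dunion n E m F) t)
        + 2 + log 2 (real t * real n + 2) + log 2 (real t * real m + 2)"
  unfolding beta_copies_def
  using vertex_split.beta_t_add_le[OF vertex_split_copies_dunion[of t n m E F], of 1]
  by (simp add: mult.commute)

section \<open>Infima of normalised subadditive sequences\<close>

lemma INF_ratio_le_add:
  fixes a b c :: "nat \<Rightarrow> nat"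
  assumes up: "\<And>t. c t \<le> a t + b t"
    and sub_a: "\<And>s t. a (s + t) \<le> a s + a t" and sub_b: "\<And>s t. b (s + t) \<le> b s + b t"
  shows "(INF t\<in>{1..}. real (c t) / t) \<le> (INF t\<in>{1..}. real (a t) / t) + (INF t\<in>{1..}. real (b t) / t)"
proof -
  define A B C where "A = (INF t\<in>{1..}. real (a t) / t)" and "B = (INF t\<in>{1..}. real (b t) / t)"
    and "C = (INF t\<in>{1..}. real (c t) / t)"
  have C: "C \<le> real (a s) / s + real (b t) / t" if "1 \<le> s" "1 \<le> t" for s t
  proof -
    have "C \<le> real (c (s * t)) / real (s * t)"
      unfolding C_def using that by (intro cINF_lower bdd_belowI2[of _ 0]) auto
    also have "c (s * t) \<le> t * a s + s * b t"
      using up[of "s * t"] mult_le_of_subadditive[OF sub_a \<open>1 \<le> t\<close>, of s]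
        mult_le_of_subadditive[OF sub_b \<open>1 \<le> s\<close>, of t] by (simp add: mult.commute)
    then have "real (c (s * t)) / real (s * t) \<le> (real t * a s + real s * b t) / (real s * real t)"
      by (simp add: divide_right_mono flip: of_nat_mult of_nat_add)
    also have "\<dots> = real (a s) / s + real (b t) / t"
      using that by (simp add: field_simps)
    finally show ?thesis .
  qed
  have "C - real (b t) / t \<le> A" if "1 \<le> t" for t
    unfolding A_def using C that by (intro cINF_greatest) (auto simp: algebra_simps)
  then have "C - A \<le> B"
    unfolding B_def by (intro cINF_greatest) (auto simp: algebra_simps)
  then show ?thesis
    unfolding A_def B_def C_def by simp
qed

lemma add_INF_ratio_le:
  fixes a b c :: "nat \<Rightarrow> nat" and err :: "nat \<Rightarrow> real"
  assumes low: "\<And>t. real (a t) + real (b t) \<le> real (c t) + err t"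
    and sub_c: "\<And>s t. c (s + t) \<le> c s + c t"
    and err: "(\<lambda>t. err t / t) \<longlonglongrightarrow> 0"
  shows "(INF t\<in>{1..}. real (a t) / t) + (INF t\<in>{1..}. real (b t) / t) \<le> (INF t\<in>{1..}. real (c t) / t)"
proof (rule cINF_greatest)
  fix t :: nat assume "t \<in> {1..}"
  then have t: "1 \<le> t"
    by simp
  have "(\<lambda>k. err (k * t) / real (k * t)) \<longlonglongrightarrow> 0"
    using LIMSEQ_subseq_LIMSEQ[OF err, of "\<lambda>k. k * t"] t by (simp add: strict_mono_def o_def)
  then have lim: "(\<lambda>k. real (c t) / t + err (k * t) / real (k * t)) \<longlonglongrightarrow> real (c t) / t"
    using tendsto_add[OF tendsto_const] by fastforce
  have "(INF t\<in>{1..}. real (a t) / t) + (INF t\<in>{1..}. real (b t) / t)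
          \<le> real (c t) / t + err (k * t) / real (k * t)" if k: "1 \<le> k" for k
  proof -
    have kt: "1 \<le> k * t"
      using k t by simp
    have "(INF t\<in>{1..}. real (a t) / t) + (INF t\<in>{1..}. real (b t) / t)
          \<le> real (a (k * t)) / real (k * t) + real (b (k * t)) / real (k * t)"
      using kt by (intro add_mono cINF_lower bdd_belowI2[of _ 0]) auto
    also have "\<dots> \<le> (real (c (k * t)) + err (k * t)) / real (k * t)"
      using low[of "k * t"] by (simp add: divide_right_mono flip: add_divide_distrib)
    also have "\<dots> \<le> (real k * real (c t) + err (k * t)) / real (k * t)"
      using mult_le_of_subadditive[OF sub_c k, of t] by (simp add: divide_right_mono flip: of_nat_mult)
    also have "\<dots> = real (c t) / t + err (k * t) / real (k * t)"
      using k t by (simp add: field_simps)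
    finally show ?thesis .
  qed
  then show "(INF t\<in>{1..}. real (a t) / t) + (INF t\<in>{1..}. real (b t) / t) \<le> real (c t) / t"
    by (intro LIMSEQ_le_const[OF lim]) auto
qed simp

lemma INF_ratio_add:
  fixes a b c :: "nat \<Rightarrow> nat" and err :: "nat \<Rightarrow> real"
  assumes "\<And>t. c t \<le> a t + b t" "\<And>t. real (a t) + real (b t) \<le> real (c t) + err t"
    and "\<And>s t. a (s + t) \<le> a s + a t" "\<And>s t. b (s + t) \<le> b s + b t"
    and "\<And>s t. c (s + t) \<le> c s + c t"
    and "(\<lambda>t. err t / t) \<longlonglongrightarrow> 0"
  shows "(INF t\<in>{1..}. real (c t) / t) = (INF t\<in>{1..}. real (a t) / t) + (INF t\<in>{1..}. real (b t) / t)"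
  using INF_ratio_le_add[of c a b] add_INF_ratio_le[of a b c err] assms by (intro antisym) auto

lemma log_affine_over_tendsto_0:
  assumes "0 \<le> x"
  shows "(\<lambda>s. log 2 (real s * x + 2) / s) \<longlonglongrightarrow> 0"
proof (rule tendsto_sandwich)
  have "0 \<le> real s * x" for s :: nat
    using assms by simp
  then have "0 \<le> log 2 (real s * x + 2)" for s :: nat
    using add_nonneg_pos[of "real s * x" 2] by simp
  then show "\<forall>\<^sub>F s in sequentially. 0 \<le> log 2 (real s * x + 2) / s"
    by (intro always_eventually allI divide_nonneg_nonneg) auto
  show "\<forall>\<^sub>F s in sequentially. log 2 (real s * x + 2) / s \<le> ln (real s) / real s / ln 2 + log 2 (x + 2) / real s"
  proof (rule eventually_sequentiallyI[of 1])
    fix s :: nat assume s: "1 \<le> s"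
    have "0 \<le> real s * x" "2 \<le> real s * 2"
      using assms s by simp_all
    then have "log 2 (real s * x + 2) \<le> log 2 (real s * (x + 2))"
      by (intro log_mono) (simp_all add: distrib_left)
    also have "\<dots> = ln (real s) / ln 2 + log 2 (x + 2)"
      using assms s by (simp add: log_def ln_mult add_divide_distrib)
    finally have "log 2 (real s * x + 2) / s \<le> (ln (real s) / ln 2 + log 2 (x + 2)) / real s"
      by (rule divide_right_mono) simp
    then show "log 2 (real s * x + 2) / s \<le> ln (real s) / real s / ln 2 + log 2 (x + 2) / real s"
      by (simp add: add_divide_distrib divide_divide_eq_left mult.commute)
  qed
  have "(\<lambda>s. ln (real s) / real s) \<longlonglongrightarrow> 0"
    using filterlim_compose[OF ln_x_over_x_tendsto_0 filterlim_real_sequentially] by simp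
  then show "(\<lambda>s. ln (real s) / real s / ln 2 + log 2 (x + 2) / real s) \<longlonglongrightarrow> 0"
    by (intro tendsto_add_zero tendsto_divide_zero lim_const_over_n)
qed simp

theorem lemma2p16:
  fixes n m :: nat and E F :: "nat \<Rightarrow> nat \<Rightarrow> bool"
  assumes "undirected n E" and "undirected m F"
  shows "beta (n + m) (dunion n E m F) = beta n E + beta m F \<and>
         beta_star (n + m) (dunion n E m F) = beta_star n E + beta_star m F"
proof
  define err where "err s = 2 + log 2 (real s * real n + 2) + log 2 (real s * real m + 2)" for s :: nat
  have err: "(\<lambda>s. err s / s) \<longlonglongrightarrow> 0"
    unfolding err_def add_divide_distrib
    by (intro tendsto_add_zero lim_const_over_n log_affine_over_tendsto_0) auto
  show "beta (n + m) (dunion n E m F) = beta n E + beta m F"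
    unfolding beta_def
    using beta_t_dunion_le beta_t_dunion_ge beta_t_alphabet_subadditive err
    by (intro INF_ratio_add[where err = err]) (auto simp: err_def add.assoc)
  show "beta_star (n + m) (dunion n E m F) = beta_star n E + beta_star m F"
    unfolding beta_star_def beta_copies_def[symmetric]
    using beta_copies_dunion_le beta_copies_dunion_ge beta_copies_subadditive err
    by (intro INF_ratio_add[where err = err]) (auto simp: err_def add.assoc)
qed

end
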